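(* Let $\Omega$ be a measurable space with reference measure $\mathrm{d}\mathbf{y}$, let $\Theta$ be a parameter set, and for each $\bm{\theta}\in\Theta$ let $f_{\bm{\theta}}(\cdot\mid\cdot):\Omega\times\Omega\to\mathbb{R}$ be such that $0<\int_\Omega\exp\{f_{\bm{\theta}}(\mathbf{y}\mid\mathbf{u})\}\,\mathrm{d}\mathbf{y}<\infty$ for all $\mathbf{u}\in\Omega$. Given a fixed initial point $\mathbf{y}_0$ and observations $\mathbf{y}_1,\ldots,\mathbf{y}_n\in\Omega$, let $$\mathcal{L}(\bm{\theta})=\sum_{t=1}^n\left[f_{\bm{\theta}}(\mathbf{y}_t\mid\mathbf{y}_{t-1})-\log\int_\Omega\exp\{f_{\bm{\theta}}(\mathbf{y}\mid\mathbf{y}_{t-1})\}\,\mathrm{d}\mathbf{y}\right].$$ Let $\mathcal{F}$ be a set of functions $\Omega\to\mathbb{R}$ containing, for every $\bm{\theta}\in\Theta$, the function $\chi_{\bm{\theta}}(\mathbf{u})=-\log\int_\Omega\exp\{f_{\bm{\theta}}(\mathbf{y}\mid\mathbf{u})\}\,\mathrm{d}\mathbf{y}$. For $\bm{\theta}\in\Theta$ and $\chi\in\mathcal{F}$ define $$\mathcal{M}_\chi(\bm{\theta},\chi)=\sum_{t=1}^n\{f_{\bm{\theta}}(\mathbf{y}_t\mid\mathbf{y}_{t-1})+\chi(\mathbf{y}_{t-1})\}-\int_\Omega\sum_{t=1}^n\exp\{f_{\bm{\theta}}(\mathbf{y}\mid\mathbf{y}_{t-1})+\chi(\mathbf{y}_{t-1})\}\,\mathrm{d}\mathbf{y}.$$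 Then the set of points $\bm{\theta}^\star\in\operatorname{argmax}_{\bm{\theta}\in\Theta}\mathcal{L}(\bm{\theta})$ coincides with the set of points $\tilde{\bm{\theta}}$ such that $(\tilde{\bm{\theta}},\chi)\in\operatorname{argmax}_{\bm{\theta}\in\Theta,\chi\in\mathcal{F}}\mathcal{M}_\chi(\bm{\theta},\chi)$ for some $\chi\in\mathcal{F}$.
   Context: $\mathcal{L}$ is the log-likelihood of a Markov chain with unnormalised transition density $\propto\exp\{f_{\bm{\theta}}(\mathbf{y}_t\mid\mathbf{y}_{t-1})\}$. *)

theory Defs
  imports "HOL-Analysis.Analysis"
begin

text \<open>Omega is the carrier of the reference measure M (the measure dy).
  f th y u stands for f_theta(y | u).  ys 0 is the fixed initial point y_0,
  ys 1, ..., ys n are the observations.\<close>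

definition norm_const :: "'a measure \<Rightarrow> ('p \<Rightarrow> 'a \<Rightarrow> 'a \<Rightarrow> real) \<Rightarrow> 'p \<Rightarrow> 'a \<Rightarrow> real" where
  "norm_const M f th u = enn2real (\<integral>\<^sup>+ y. ennreal (exp (f th y u)) \<partial>M)"

definition loglik :: "'a measure \<Rightarrow> ('p \<Rightarrow> 'a \<Rightarrow> 'a \<Rightarrow> real) \<Rightarrow> (nat \<Rightarrow> 'a) \<Rightarrow> nat \<Rightarrow> 'p \<Rightarrow> real" where
  "loglik M f ys n th =
     (\<Sum>t\<in>{1..n}. f th (ys t) (ys (t - 1)) - ln (norm_const M f th (ys (t - 1))))"

definition chi_of :: "'a measure \<Rightarrow> ('p \<Rightarrow> 'a \<Rightarrow> 'a \<Rightarrow> real) \<Rightarrow> 'p \<Rightarrow> 'a \<Rightarrow> real" where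
  "chi_of M f th u = - ln (norm_const M f th u)"

definition M_chi :: "'a measure \<Rightarrow> ('p \<Rightarrow> 'a \<Rightarrow> 'a \<Rightarrow> real) \<Rightarrow> (nat \<Rightarrow> 'a) \<Rightarrow> nat \<Rightarrow> 'p \<Rightarrow> ('a \<Rightarrow> real) \<Rightarrow> real" where
  "M_chi M f ys n th chi =
     (\<Sum>t\<in>{1..n}. f th (ys t) (ys (t - 1)) + chi (ys (t - 1)))
     - (\<integral>y. (\<Sum>t\<in>{1..n}. exp (f th y (ys (t - 1)) + chi (ys (t - 1)))) \<partial>M)"

end

theory Submission
  imports Defs
begin

text \<open>For fixed \<open>\<theta>\<close>, each summand of \<open>M_chi\<close> has the form \<open>a + c - e\<^sup>c Z\<close> with
  \<open>Z\<close> the normalising constant; by \<open>e\<^sup>x \<ge> 1 + x\<close> it is at most \<open>a - ln Z - 1\<close>, with equality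
  exactly at \<open>c = - ln Z\<close>, i.e. at \<open>\<chi> = \<chi>\<^sub>\<theta>\<close>. Hence \<open>sup\<^sub>\<chi> M_chi(\<theta>, \<chi>) = \<L>(\<theta>) - n\<close>
  is attained in \<open>F\<close>, and maximising the profile is maximising \<open>\<L>\<close>.\<close>

lemma argmax_eq_argmax_profile:
  fixes L :: "'p \<Rightarrow> real" and Q :: "'p \<Rightarrow> 'c \<Rightarrow> real"
  assumes le: "\<And>th chi. th \<in> Theta \<Longrightarrow> chi \<in> F \<Longrightarrow> Q th chi \<le> L th"
    and attained: "\<And>th. th \<in> Theta \<Longrightarrow> g th \<in> F \<and> Q th (g th) = L th"
  shows "{th \<in> Theta. \<forall>th'\<in>Theta. L th' \<le> L th}
       = {th. \<exists>chi\<in>F. th \<in> Theta \<and> (\<forall>th'\<in>Theta. \<forall>chi'\<in>F. Q th' chi' \<le> Q th chi)}"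
proof (intro set_eqI iffI)
  fix th assume "th \<in> {th \<in> Theta. \<forall>th'\<in>Theta. L th' \<le> L th}"
  then have "th \<in> Theta" and "\<forall>th'\<in>Theta. \<forall>chi'\<in>F. Q th' chi' \<le> Q th (g th)"
    using le attained by (fastforce intro: order_trans)+
  then show "th \<in> {th. \<exists>chi\<in>F. th \<in> Theta \<and> (\<forall>th'\<in>Theta. \<forall>chi'\<in>F. Q th' chi' \<le> Q th chi)}"
    using attained by blast
next
  fix th assume "th \<in> {th. \<exists>chi\<in>F. th \<in> Theta \<and> (\<forall>th'\<in>Theta. \<forall>chi'\<in>F. Q th' chi' \<le> Q th chi)}"
  then obtain chi where th: "th \<in> Theta" "chi \<in> F"
    and max: "\<And>th'. th' \<in> Theta \<Longrightarrow> Q th' (g th') \<le> Q th chi"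
    using attained by blast
  have "L th' \<le> L th" if "th' \<in> Theta" for th'
    using max[OF that] attained[OF that] le[OF th] by simp
  with th show "th \<in> {th \<in> Theta. \<forall>th'\<in>Theta. L th' \<le> L th}" by blast
qed

lemma add_sub_exp_mult_le_minus_ln:
  fixes c Z :: real assumes "Z > 0"
  shows "c - exp c * Z \<le> - ln Z - 1"
proof -
  have "exp c * Z = exp (c + ln Z)" using assms by (simp add: exp_add)
  with exp_ge_add_one_self[of "c + ln Z"] show ?thesis by linarith
qed

lemma minus_ln_sub_exp_minus_ln_mult:
  fixes Z :: real assumes "Z > 0"
  shows "- ln Z - exp (- ln Z) * Z = - ln Z - 1"
  using assms by (simp add: exp_minus)

lemma norm_const_pos:
  assumes "0 < (\<integral>\<^sup>+ y. ennreal (exp (f th y u)) \<partial>M)"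
    and "(\<integral>\<^sup>+ y. ennreal (exp (f th y u)) \<partial>M) < \<infinity>"
  shows "0 < norm_const M f th u"
  using assms unfolding norm_const_def by (simp add: enn2real_positive_iff)

lemma integral_exp_eq_norm_const:
  assumes "(\<lambda>y. f th y u) \<in> borel_measurable M"
  shows "(\<integral>y. exp (f th y u) \<partial>M) = norm_const M f th u"
  unfolding norm_const_def using assms by (subst integral_eq_nn_integral) auto

lemma M_chi_eq_sum:
  assumes meas: "\<And>t. t \<in> {1..n} \<Longrightarrow> (\<lambda>y. f th y (ys (t - 1))) \<in> borel_measurable M"
    and fin: "\<And>t. t \<in> {1..n} \<Longrightarrow> (\<integral>\<^sup>+ y. ennreal (exp (f th y (ys (t - 1)))) \<partial>M) < \<infinity>"
  shows "M_chi M f ys n th chi =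
    (\<Sum>t\<in>{1..n}. f th (ys t) (ys (t - 1)) + chi (ys (t - 1))
       - exp (chi (ys (t - 1))) * norm_const M f th (ys (t - 1)))"
proof -
  have exp_split: "exp (f th y (ys (t - 1)) + chi (ys (t - 1)))
      = exp (chi (ys (t - 1))) * exp (f th y (ys (t - 1)))" for y t
    by (simp add: exp_add)
  have "(\<integral>y. (\<Sum>t\<in>{1..n}. exp (f th y (ys (t - 1)) + chi (ys (t - 1)))) \<partial>M)
      = (\<Sum>t\<in>{1..n}. exp (chi (ys (t - 1))) * (\<integral>y. exp (f th y (ys (t - 1))) \<partial>M))"
    unfolding exp_split using meas fin
    by (subst Bochner_Integration.integral_sum) (auto intro!: integrableI_bounded)
  also have "\<dots> = (\<Sum>t\<in>{1..n}. exp (chi (ys (t - 1))) * norm_const M f th (ys (t - 1)))"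
    using meas by (simp add: integral_exp_eq_norm_const)
  finally show ?thesis unfolding M_chi_def by (simp add: sum.distrib sum_subtractf)
qed

context
  fixes M :: "'a measure" and f :: "'p \<Rightarrow> 'a \<Rightarrow> 'a \<Rightarrow> real" and ys :: "nat \<Rightarrow> 'a"
    and n :: nat and th :: 'p
  assumes meas: "\<And>t. t \<in> {1..n} \<Longrightarrow> (\<lambda>y. f th y (ys (t - 1))) \<in> borel_measurable M"
    and pos: "\<And>t. t \<in> {1..n} \<Longrightarrow> 0 < (\<integral>\<^sup>+ y. ennreal (exp (f th y (ys (t - 1)))) \<partial>M)"
    and fin: "\<And>t. t \<in> {1..n} \<Longrightarrow> (\<integral>\<^sup>+ y. ennreal (exp (f th y (ys (t - 1)))) \<partial>M) < \<infinity>"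
begin

lemma norm_const_prev_pos: "t \<in> {1..n} \<Longrightarrow> 0 < norm_const M f th (ys (t - 1))"
  using pos fin by (rule norm_const_pos)

lemma M_chi_eq:
  "M_chi M f ys n th chi =
    (\<Sum>t\<in>{1..n}. f th (ys t) (ys (t - 1)) + chi (ys (t - 1))
       - exp (chi (ys (t - 1))) * norm_const M f th (ys (t - 1)))"
  using meas fin by (rule M_chi_eq_sum)

lemma M_chi_le_loglik: "M_chi M f ys n th chi \<le> loglik M f ys n th - n"
proof -
  have "M_chi M f ys n th chi
      \<le> (\<Sum>t\<in>{1..n}. f th (ys t) (ys (t - 1)) - ln (norm_const M f th (ys (t - 1))) - 1)"
    unfolding M_chi_eq using add_sub_exp_mult_le_minus_ln[OF norm_const_prev_pos]
    by (intro sum_mono) (smt (verit))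
  also have "\<dots> = loglik M f ys n th - n" unfolding loglik_def by (simp add: sum_subtractf)
  finally show ?thesis .
qed

lemma M_chi_chi_of: "M_chi M f ys n th (chi_of M f th) = loglik M f ys n th - n"
proof -
  have "M_chi M f ys n th (chi_of M f th)
      = (\<Sum>t\<in>{1..n}. f th (ys t) (ys (t - 1)) - ln (norm_const M f th (ys (t - 1))) - 1)"
    unfolding M_chi_eq chi_of_def using minus_ln_sub_exp_minus_ln_mult[OF norm_const_prev_pos]
    by (intro sum.cong) (smt (verit))+
  also have "\<dots> = loglik M f ys n th - n" unfolding loglik_def by (simp add: sum_subtractf)
  finally show ?thesis .
qed

end

theorem corollary1:
  fixes M :: "'a measure" and Theta :: "'p set" and f :: "'p \<Rightarrow> 'a \<Rightarrow> 'a \<Rightarrow> real"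
    and ys :: "nat \<Rightarrow> 'a" and n :: nat and F :: "('a \<Rightarrow> real) set"
  assumes meas: "\<And>th u. th \<in> Theta \<Longrightarrow> u \<in> space M \<Longrightarrow> (\<lambda>y. f th y u) \<in> borel_measurable M"
    and pos: "\<And>th u. th \<in> Theta \<Longrightarrow> u \<in> space M \<Longrightarrow> 0 < (\<integral>\<^sup>+ y. ennreal (exp (f th y u)) \<partial>M)"
    and fin: "\<And>th u. th \<in> Theta \<Longrightarrow> u \<in> space M \<Longrightarrow> (\<integral>\<^sup>+ y. ennreal (exp (f th y u)) \<partial>M) < \<infinity>"
    and obs: "\<And>t. t \<le> n \<Longrightarrow> ys t \<in> space M"
    and F: "\<And>th. th \<in> Theta \<Longrightarrow> chi_of M f th \<in> F"
  shows "{th \<in> Theta. \<forall>th'\<in>Theta. loglik M f ys n th' \<le> loglik M f ys n th}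
       = {th. \<exists>chi\<in>F. th \<in> Theta \<and>
               (\<forall>th'\<in>Theta. \<forall>chi'\<in>F. M_chi M f ys n th' chi' \<le> M_chi M f ys n th chi)}"
proof -
  have prev_obs: "ys (t - 1) \<in> space M" if "t \<in> {1..n}" for t
    using obs[of "t - 1"] that by auto
  have le: "M_chi M f ys n th chi \<le> loglik M f ys n th - n" if "th \<in> Theta" for th chi
    using meas[OF that prev_obs] pos[OF that prev_obs] fin[OF that prev_obs]
    by (rule M_chi_le_loglik)
  have attained: "M_chi M f ys n th (chi_of M f th) = loglik M f ys n th - n"
    if "th \<in> Theta" for th
    using meas[OF that prev_obs] pos[OF that prev_obs] fin[OF that prev_obs]
    by (rule M_chi_chi_of)
  have "{th \<in> Theta. \<forall>th'\<in>Theta. loglik M f ys n th' \<le> loglik M f ys n th}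
      = {th \<in> Theta. \<forall>th'\<in>Theta. loglik M f ys n th' - n \<le> loglik M f ys n th - n}"
    by simp
  also have "\<dots> = {th. \<exists>chi\<in>F. th \<in> Theta \<and>
               (\<forall>th'\<in>Theta. \<forall>chi'\<in>F. M_chi M f ys n th' chi' \<le> M_chi M f ys n th chi)}"
    using F le attained
    by (intro argmax_eq_argmax_profile[where g = "chi_of M f"]) auto
  finally show ?thesis .
qed

end
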